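(* Let $n>1$, let $K\subseteq\mathbb{R}^n$ be a pointed closed convex cone with nonempty interior inducing the partial order $x\preceq y\iff y-x\in K$, and let $Y$ be a nonempty open subset of $\mathbb{R}^n$ equipped with the relative Euclidean topology $\tau$ and the restriction of $\preceq$. Then $(Y,\tau,\preceq)$ is a partially ordered topological space and the canonical map $y\mapsto y^\downarrow$ topologically order-embeds $(Y,\tau,\preceq)$ in $(C(Y),\tau_F,\subseteq)$.
   Context: A partially ordered topological space is a topological space with a partial order whose graph is closed in the product. For $y\in Y$, $y^\downarrow=\{u\in Y:u\preceq y\}$ (taken inside $Y$). $C(Y)$ = closed subsets of $Y$, $C^\downarrow(Y)=\{y^\downarrow:y\in Y\}$. The Fell topology $\tau_F$ on $C(Y)$ is generated by the sets $\{A\in C(Y):A\cap O\neq\emptyset\}$ ($O\subseteq Y$ open) and $\{A\in C(Y):A\cap D=\emptyset\}$ ($D\subseteq Y$ compact). "Topologically order-embeds" means: $x\preceq y\iff x^\downarrow\subseteq y^\downarrow$, and $y\mapsto y^\downarrow$ is a homeomorphism from $(Y,\tau)$ onto $C^\downarrow(Y)$ with the relative Fell topology. *)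

theory Defs
  imports "HOL-Analysis.Analysis"
begin

definition partial_order_on_set :: "'a set \<Rightarrow> ('a \<Rightarrow> 'a \<Rightarrow> bool) \<Rightarrow> bool" where
  "partial_order_on_set S le \<longleftrightarrow>
     (\<forall>x\<in>S. le x x) \<and>
     (\<forall>x\<in>S. \<forall>y\<in>S. le x y \<and> le y x \<longrightarrow> x = y) \<and>
     (\<forall>x\<in>S. \<forall>y\<in>S. \<forall>z\<in>S. le x y \<and> le y z \<longrightarrow> le x z)"

definition po_top_space :: "'a topology \<Rightarrow> ('a \<Rightarrow> 'a \<Rightarrow> bool) \<Rightarrow> bool" where
  "po_top_space X le \<longleftrightarrow>
     partial_order_on_set (topspace X) le \<and>
     closedin (prod_topology X X) {(x, y). x \<in> topspace X \<and> y \<in> topspace X \<and> le x y}"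

definition downset :: "'a topology \<Rightarrow> ('a \<Rightarrow> 'a \<Rightarrow> bool) \<Rightarrow> 'a \<Rightarrow> 'a set" where
  "downset X le y = {u \<in> topspace X. le u y}"

definition closed_sets :: "'a topology \<Rightarrow> 'a set set" where
  "closed_sets X = {A. closedin X A}"

definition fell_topology :: "'a topology \<Rightarrow> 'a set topology" where
  "fell_topology X = subtopology
     (topology_generated_by
        ({{A \<in> closed_sets X. A \<inter> U \<noteq> {}} | U. openin X U} \<union>
         {{A \<in> closed_sets X. A \<inter> D = {}} | D. compactin X D}))
     (closed_sets X)"

definition top_order_embeds_down :: "'a topology \<Rightarrow> ('a \<Rightarrow> 'a \<Rightarrow> bool) \<Rightarrow> bool" where
  "top_order_embeds_down X le \<longleftrightarrow>
     (\<forall>x\<in>topspace X. \<forall>y\<in>topspace X. le x y \<longleftrightarrow> downset X le x \<subseteq> downset X le y) \<and>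
     homeomorphic_map X
       (subtopology (fell_topology X) (downset X le ` topspace X))
       (downset X le)"

end

theory Submission
  imports Defs
begin

text \<open>The down set of y is Y \<inter> (y - K), a closed set, and y \<mapsto> y - K is injective because K
  is pointed. Preimages of Fell subbasic sets are open: the down sets hitting an open U are
  those of the points of Y \<inter> (U + K), and the down sets missing a compact D are those of the
  points outside the closed set D + K. For openness of the map, take y \<in> V with the sphere S of
  radius r about y inside V. Since S \<inter> (y - K) is compact and disjoint from y + K, it keeps a
  positive distance \<delta> from y + K. Any down set meeting the ball of radius \<delta> about y whose top
  lies outside V must cross S along a segment parallel to K, at a point within \<delta> of y + K;
  so the down sets meeting that ball and missing the part of S within \<delta> of y + K are exactly
  those of points of V near y.\<close>

definition fell_subbasis :: "'a topology \<Rightarrow> 'a set set set" where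
  "fell_subbasis X =
     {{A \<in> closed_sets X. A \<inter> U \<noteq> {}} | U. openin X U} \<union>
     {{A \<in> closed_sets X. A \<inter> D = {}} | D. compactin X D}"

lemma fell_topology_eq:
  "fell_topology X = subtopology (topology_generated_by (fell_subbasis X)) (closed_sets X)"
  unfolding fell_topology_def fell_subbasis_def ..

lemma closed_sets_in_fell_subbasis: "closed_sets X \<in> fell_subbasis X"
proof -
  have "closed_sets X = {A \<in> closed_sets X. A \<inter> {} = {}}"
    by simp
  then show ?thesis
    unfolding fell_subbasis_def by blast
qed

lemma hit_in_fell_subbasis:
  "openin X U \<Longrightarrow> {A \<in> closed_sets X. A \<inter> U \<noteq> {}} \<in> fell_subbasis X"
  unfolding fell_subbasis_def by blast

lemma miss_in_fell_subbasis:
  "compactin X D \<Longrightarrow> {A \<in> closed_sets X. A \<inter> D = {}} \<in> fell_subbasis X"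
  unfolding fell_subbasis_def by blast

lemma topspace_fell_topology: "topspace (fell_topology X) = closed_sets X"
  using closed_sets_in_fell_subbasis[of X] by (auto simp: fell_topology_eq)

lemma openin_fell_topology_subbasis:
  assumes "W \<in> fell_subbasis X"
  shows "openin (fell_topology X) W"
proof -
  have "openin (topology_generated_by (fell_subbasis X)) W"
    using assms by (simp add: openin_topology_generated_by_iff generate_topology_on.Basis)
  moreover have "W \<subseteq> closed_sets X"
    using assms unfolding fell_subbasis_def by blast
  ultimately show ?thesis
    unfolding fell_topology_eq by (metis openin_subtopology_Int Int_absorb2)
qed

lemma continuous_map_fell_topology:
  assumes closed: "\<And>z. z \<in> topspace Z \<Longrightarrow> f z \<in> closed_sets X"
    and hit: "\<And>U. openin X U \<Longrightarrow> openin Z {z \<in> topspace Z. f z \<inter> U \<noteq> {}}"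
    and miss: "\<And>D. compactin X D \<Longrightarrow> openin Z {z \<in> topspace Z. f z \<inter> D = {}}"
  shows "continuous_map Z (fell_topology X) f"
proof -
  have "continuous_map Z (topology_generated_by (fell_subbasis X)) f"
  proof (rule continuous_on_generated_topo)
    fix W
    assume "W \<in> fell_subbasis X"
    then consider (hit_set) U where "openin X U" "W = {A \<in> closed_sets X. A \<inter> U \<noteq> {}}"
      | (miss_set) D where "compactin X D" "W = {A \<in> closed_sets X. A \<inter> D = {}}"
      unfolding fell_subbasis_def by blast
    then show "openin Z (f -` W \<inter> topspace Z)"
    proof cases
      case hit_set
      then have "f -` W \<inter> topspace Z = {z \<in> topspace Z. f z \<inter> U \<noteq> {}}"
        using closed by auto
      with hit[OF hit_set(1)] show ?thesis by simp
    next
      case miss_set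
      then have "f -` W \<inter> topspace Z = {z \<in> topspace Z. f z \<inter> D = {}}"
        using closed by auto
      with miss[OF miss_set(1)] show ?thesis by simp
    qed
  next
    show "f ` topspace Z \<subseteq> \<Union>(fell_subbasis X)"
      using closed closed_sets_in_fell_subbasis by blast
  qed
  then show ?thesis
    unfolding fell_topology_eq by (rule continuous_map_into_subtopology) (use closed in blast)
qed

lemma open_map_into_fell_topology:
  assumes closed: "\<And>z. z \<in> topspace Z \<Longrightarrow> f z \<in> closed_sets X"
    and separate: "\<And>V z. openin Z V \<Longrightarrow> z \<in> V \<Longrightarrow>
      \<exists>U D. openin X U \<and> compactin X D \<and> f z \<inter> U \<noteq> {} \<and> f z \<inter> D = {} \<and>
        (\<forall>z'\<in>topspace Z. f z' \<inter> U \<noteq> {} \<and> f z' \<inter> D = {} \<longrightarrow> z' \<in> V)"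
  shows "open_map Z (subtopology (fell_topology X) (f ` topspace Z)) f"
  unfolding open_map_def
proof (intro allI impI)
  fix V
  assume V: "openin Z V"
  show "openin (subtopology (fell_topology X) (f ` topspace Z)) (f ` V)"
  proof (subst openin_subopen, intro ballI)
    fix A
    assume "A \<in> f ` V"
    then obtain z where z: "z \<in> V" "A = f z" by blast
    then obtain U D where "openin X U" "compactin X D" "f z \<inter> U \<noteq> {}" "f z \<inter> D = {}"
      and UD: "\<forall>z'\<in>topspace Z. f z' \<inter> U \<noteq> {} \<and> f z' \<inter> D = {} \<longrightarrow> z' \<in> V"
      using separate[OF V z(1)] by blast
    define W where "W = {B \<in> closed_sets X. B \<inter> U \<noteq> {}} \<inter> {B \<in> closed_sets X. B \<inter> D = {}}"
    have "openin (fell_topology X) W"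
      unfolding W_def
      by (intro openin_Int openin_fell_topology_subbasis hit_in_fell_subbasis miss_in_fell_subbasis)
        fact+
    then have "openin (subtopology (fell_topology X) (f ` topspace Z)) (W \<inter> f ` topspace Z)"
      by (rule openin_subtopology_Int)
    moreover have "A \<in> W \<inter> f ` topspace Z"
      using z V openin_subset closed \<open>f z \<inter> U \<noteq> {}\<close> \<open>f z \<inter> D = {}\<close> unfolding W_def by auto
    moreover have "W \<inter> f ` topspace Z \<subseteq> f ` V"
      using UD unfolding W_def by auto
    ultimately show "\<exists>T. openin (subtopology (fell_topology X) (f ` topspace Z)) T \<and> A \<in> T \<and> T \<subseteq> f ` V"
      by blast
  qed
qed

lemma homeomorphic_map_into_fell_topology:
  assumes closed: "\<And>z. z \<in> topspace Z \<Longrightarrow> f z \<in> closed_sets X"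
    and hit: "\<And>U. openin X U \<Longrightarrow> openin Z {z \<in> topspace Z. f z \<inter> U \<noteq> {}}"
    and miss: "\<And>D. compactin X D \<Longrightarrow> openin Z {z \<in> topspace Z. f z \<inter> D = {}}"
    and separate: "\<And>V z. openin Z V \<Longrightarrow> z \<in> V \<Longrightarrow>
      \<exists>U D. openin X U \<and> compactin X D \<and> f z \<inter> U \<noteq> {} \<and> f z \<inter> D = {} \<and>
        (\<forall>z'\<in>topspace Z. f z' \<inter> U \<noteq> {} \<and> f z' \<inter> D = {} \<longrightarrow> z' \<in> V)"
    and inj: "inj_on f (topspace Z)"
  shows "homeomorphic_map Z (subtopology (fell_topology X) (f ` topspace Z)) f"
proof (rule bijective_open_imp_homeomorphic_map)
  have "continuous_map Z (fell_topology X) f"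
    using closed hit miss by (rule continuous_map_fell_topology)
  then show "continuous_map Z (subtopology (fell_topology X) (f ` topspace Z)) f"
    by (rule continuous_map_into_subtopology) (intro Pi_I imageI)
  show "open_map Z (subtopology (fell_topology X) (f ` topspace Z)) f"
    using closed separate by (rule open_map_into_fell_topology)
  show "f ` topspace Z = topspace (subtopology (fell_topology X) (f ` topspace Z))"
    using closed by (auto simp: topspace_fell_topology)
qed (rule inj)

locale closed_pointed_cone =
  fixes K :: "'a::euclidean_space set"
  assumes convex_cone: "convex_cone K"
    and closed: "closed K"
    and pointed: "K \<inter> uminus ` K \<subseteq> {0}"
begin

abbreviation cone_le :: "'a \<Rightarrow> 'a \<Rightarrow> bool" where
  "cone_le x y \<equiv> y - x \<in> K"

lemma zero_mem: "0 \<in> K"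
  using convex_cone by (simp add: convex_cone_iff)

lemma add_mem: "x \<in> K \<Longrightarrow> y \<in> K \<Longrightarrow> x + y \<in> K"
  using convex_cone by (rule convex_cone_add)

lemma scaleR_mem: "x \<in> K \<Longrightarrow> 0 \<le> c \<Longrightarrow> c *\<^sub>R x \<in> K"
  using convex_cone by (simp add: convex_cone_scaleR)

lemma eq_zero_if_uminus_mem: "x \<in> K \<Longrightarrow> - x \<in> K \<Longrightarrow> x = 0"
  using pointed by (metis IntI image_eqI minus_minus singletonD subsetD)

lemma closed_minus_vimage: "closed {u. y - u \<in> K}"
  using continuous_closed_vimage[OF closed, of "\<lambda>u. y - u"] by (simp add: vimage_def)

lemma downset_cone_le: "downset (top_of_set Y) cone_le y = {u \<in> Y. y - u \<in> K}"
  by (simp add: downset_def)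

lemma partial_order_on_set_cone_le: "partial_order_on_set S cone_le"
  unfolding partial_order_on_set_def
proof (intro conjI ballI impI)
  show "cone_le x x" for x
    using zero_mem by simp
next
  fix x y
  assume "cone_le x y \<and> cone_le y x"
  then show "x = y"
    using eq_zero_if_uminus_mem[of "y - x"] by simp
next
  fix x y z
  assume "cone_le x y \<and> cone_le y z"
  then have "(z - y) + (y - x) \<in> K"
    using add_mem by blast
  then show "cone_le x z"
    by simp
qed

lemma po_top_space_cone_le: "po_top_space (top_of_set Y) cone_le"
  unfolding po_top_space_def
proof
  show "partial_order_on_set (topspace (top_of_set Y)) cone_le"
    by (rule partial_order_on_set_cone_le)
  have "closed {p :: 'a \<times> 'a. snd p - fst p \<in> K}"
    using continuous_closed_vimage[OF closed, of "\<lambda>p. snd p - fst p"]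
    by (simp add: vimage_def continuous_intros)
  then have "closedin (top_of_set (Y \<times> Y)) ((Y \<times> Y) \<inter> {p. snd p - fst p \<in> K})"
    by (rule closedin_closed_Int)
  moreover have "(Y \<times> Y) \<inter> {p. snd p - fst p \<in> K} = {(x, y). x \<in> Y \<and> y \<in> Y \<and> cone_le x y}"
    by auto
  ultimately show "closedin (prod_topology (top_of_set Y) (top_of_set Y))
      {(x, y). x \<in> topspace (top_of_set Y) \<and> y \<in> topspace (top_of_set Y) \<and> cone_le x y}"
    by (simp add: subtopology_Times[symmetric])
qed

lemma cone_le_iff_downset_subset:
  assumes "x \<in> Y" "y \<in> Y"
  shows "cone_le x y \<longleftrightarrow> downset (top_of_set Y) cone_le x \<subseteq> downset (top_of_set Y) cone_le y"
proof
  assume "cone_le x y"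
  then show "downset (top_of_set Y) cone_le x \<subseteq> downset (top_of_set Y) cone_le y"
    using add_mem[of "y - x"] by (fastforce simp: downset_cone_le)
next
  assume "downset (top_of_set Y) cone_le x \<subseteq> downset (top_of_set Y) cone_le y"
  moreover have "x \<in> downset (top_of_set Y) cone_le x"
    using assms zero_mem by (simp add: downset_cone_le)
  ultimately show "cone_le x y"
    by (auto simp: downset_cone_le)
qed

lemma inj_on_downset: "inj_on (downset (top_of_set Y) cone_le) Y"
proof (rule inj_onI)
  fix x y
  assume "x \<in> Y" "y \<in> Y" "downset (top_of_set Y) cone_le x = downset (top_of_set Y) cone_le y"
  then have "cone_le x y" "cone_le y x"
    using cone_le_iff_downset_subset by blast+
  then show "x = y"
    using eq_zero_if_uminus_mem[of "y - x"] by simp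
qed

lemma downset_in_closed_sets: "downset (top_of_set Y) cone_le y \<in> closed_sets (top_of_set Y)"
  unfolding closed_sets_def downset_cone_le
  using closedin_closed_Int[OF closed_minus_vimage, of Y y] by (simp add: Collect_conj_eq Int_commute)

lemma openin_downset_hit:
  assumes "open Y" "openin (top_of_set Y) U"
  shows "openin (top_of_set Y) {y \<in> Y. downset (top_of_set Y) cone_le y \<inter> U \<noteq> {}}"
proof -
  have U: "open U" "U \<subseteq> Y"
    using assms by (simp_all add: openin_open_eq)
  have "{y \<in> Y. downset (top_of_set Y) cone_le y \<inter> U \<noteq> {}} = Y \<inter> (\<Union>u\<in>U. \<Union>k\<in>K. {u + k})"
  proof (intro equalityI subsetI)
    fix y
    assume "y \<in> {y \<in> Y. downset (top_of_set Y) cone_le y \<inter> U \<noteq> {}}"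
    then obtain u where "y \<in> Y" "u \<in> U" "y - u \<in> K"
      by (auto simp: downset_cone_le)
    moreover have "y = u + (y - u)"
      by simp
    ultimately show "y \<in> Y \<inter> (\<Union>u\<in>U. \<Union>k\<in>K. {u + k})"
      by blast
  next
    fix y
    assume "y \<in> Y \<inter> (\<Union>u\<in>U. \<Union>k\<in>K. {u + k})"
    then obtain u k where "y \<in> Y" "u \<in> U" "k \<in> K" "y = u + k"
      by blast
    then show "y \<in> {y \<in> Y. downset (top_of_set Y) cone_le y \<inter> U \<noteq> {}}"
      using U by (auto simp: downset_cone_le)
  qed
  moreover have "open (\<Union>u\<in>U. \<Union>k\<in>K. {u + k})"
    using U open_sums by blast
  ultimately show ?thesis
    by (simp add: openin_open_Int)
qed

lemma openin_downset_miss: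
  assumes "compactin (top_of_set Y) D"
  shows "openin (top_of_set Y) {y \<in> Y. downset (top_of_set Y) cone_le y \<inter> D = {}}"
proof -
  have D: "compact D" "D \<subseteq> Y"
    using assms by (simp_all add: compactin_subtopology)
  have "{y \<in> Y. downset (top_of_set Y) cone_le y \<inter> D = {}} = Y \<inter> - (\<Union>k\<in>K. \<Union>d\<in>D. {k + d})"
  proof (intro equalityI subsetI)
    fix y
    assume "y \<in> {y \<in> Y. downset (top_of_set Y) cone_le y \<inter> D = {}}"
    then show "y \<in> Y \<inter> - (\<Union>k\<in>K. \<Union>d\<in>D. {k + d})"
      using D by (auto simp: downset_cone_le)
  next
    fix y
    assume y: "y \<in> Y \<inter> - (\<Union>k\<in>K. \<Union>d\<in>D. {k + d})"
    have "y - d \<notin> K" if "d \<in> D" for d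
      using y that by (metis (no_types, lifting) ComplD IntD2 UN_iff diff_add_cancel singletonI)
    then show "y \<in> {y \<in> Y. downset (top_of_set Y) cone_le y \<inter> D = {}}"
      using y by (auto simp: downset_cone_le)
  qed
  moreover have "open (- (\<Union>k\<in>K. \<Union>d\<in>D. {k + d}))"
    using closed_compact_sums[OF closed D(1)] by (rule open_Compl)
  ultimately show ?thesis
    by (simp add: openin_open_Int)
qed

lemma sphere_gap:
  assumes "0 < r"
  obtains \<delta> where "0 < \<delta>" "\<delta> < r" "\<And>w. norm w = r \<Longrightarrow> - w \<in> K \<Longrightarrow> \<delta> < infdist w K"
proof -
  define T where "T = sphere 0 r \<inter> uminus -` K"
  have "\<exists>\<delta>>0. \<delta> < r \<and> (\<forall>w\<in>T. \<delta> < infdist w K)"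
  proof (cases "T = {}")
    case True
    then show ?thesis
      using assms by (intro exI[of _ "r/2"]) auto
  next
    case False
    have "closed (uminus -` K)"
      using continuous_closed_vimage[OF closed, of uminus] by (simp add: continuous_intros)
    then have "compact T"
      unfolding T_def by (simp add: compact_Int_closed)
    moreover have "continuous_on T (\<lambda>w. infdist w K)"
      by (intro continuous_intros)
    ultimately obtain w0 where w0: "w0 \<in> T" "\<forall>w\<in>T. infdist w0 K \<le> infdist w K"
      using continuous_attains_inf[OF _ False] by blast
    have "w0 \<notin> K"
    proof
      assume "w0 \<in> K"
      with w0(1) have "w0 = 0"
        using eq_zero_if_uminus_mem unfolding T_def by simp
      with w0(1) assms show False
        unfolding T_def by simp
    qed
    then have "0 < infdist w0 K"
      using infdist_pos_not_in_closed[OF closed] zero_mem by blast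
    then show ?thesis
      using assms w0 by (intro exI[of _ "min (r/2) (infdist w0 K / 2)"]) auto
  qed
  then show ?thesis
    using that unfolding T_def by (auto simp: dist_norm)
qed

lemma segment_crosses_sphere:
  assumes "norm (u - y) \<le> r" "r \<le> norm (y' - y)" "y' - u \<in> K"
  obtains z where "norm (z - y) = r" "y' - z \<in> K" "infdist (z - y) K \<le> norm (u - y)"
proof -
  define f where "f = (\<lambda>t::real. norm (u + t *\<^sub>R (y' - u) - y))"
  have "continuous_on {0..1} f"
    unfolding f_def by (intro continuous_intros)
  moreover have "f 0 \<le> r" "r \<le> f 1"
    using assms unfolding f_def by simp_all
  ultimately obtain t where t: "0 \<le> t" "t \<le> 1" "f t = r"
    using IVT'[of f 0 r 1] by auto
  define z where "z = u + t *\<^sub>R (y' - u)"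
  have "norm (z - y) = r"
    using t unfolding z_def f_def by simp
  moreover have "y' - z = (1 - t) *\<^sub>R (y' - u)"
    unfolding z_def by (simp add: algebra_simps)
  then have "y' - z \<in> K"
    using scaleR_mem assms(3) t by simp
  moreover have "infdist (z - y) K \<le> norm (u - y)"
  proof -
    have "infdist (z - y) K \<le> dist (z - y) (t *\<^sub>R (y' - u))"
      using scaleR_mem assms(3) t(1) by (intro infdist_le) simp
    also have "\<dots> = norm (u - y)"
      unfolding z_def dist_norm by (simp add: algebra_simps)
    finally show ?thesis .
  qed
  ultimately show ?thesis
    using that by blast
qed

lemma downset_separation:
  assumes "open V" "y \<in> V"
  obtains U D where "open U" "compact D" "U \<subseteq> V" "D \<subseteq> V" "y \<in> U"
    "\<And>z. z \<in> D \<Longrightarrow> y - z \<notin> K"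
    "\<And>y' u. u \<in> U \<Longrightarrow> y' - u \<in> K \<Longrightarrow> (\<And>z. z \<in> D \<Longrightarrow> y' - z \<notin> K) \<Longrightarrow> y' \<in> V"
proof -
  obtain r where r: "0 < r" "cball y r \<subseteq> V"
    using assms open_contains_cball by blast
  obtain \<delta> where \<delta>: "0 < \<delta>" "\<delta> < r" "\<And>w. norm w = r \<Longrightarrow> - w \<in> K \<Longrightarrow> \<delta> < infdist w K"
    using sphere_gap[OF r(1)] by blast
  define D where "D = sphere y r \<inter> {z. infdist (z - y) K \<le> \<delta>}"
  have "closed {z. infdist (z - y) K \<le> \<delta>}"
    by (intro closed_Collect_le continuous_intros)
  then have "compact D"
    unfolding D_def by (simp add: compact_Int_closed)
  moreover have "ball y \<delta> \<subseteq> V" "D \<subseteq> V"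
    using r \<delta> unfolding D_def by auto
  moreover have "y - z \<notin> K" if "z \<in> D" for z
  proof
    assume "y - z \<in> K"
    then have "\<delta> < infdist (z - y) K"
      using that \<delta>(3)[of "z - y"] unfolding D_def by (simp add: dist_norm norm_minus_commute)
    with that show False
      unfolding D_def by simp
  qed
  moreover have "y' \<in> V"
    if u: "u \<in> ball y \<delta>" "y' - u \<in> K" and miss: "\<And>z. z \<in> D \<Longrightarrow> y' - z \<notin> K" for y' u
  proof (rule ccontr)
    assume "y' \<notin> V"
    then have "r \<le> norm (y' - y)"
      using r(2) by (force simp: dist_norm norm_minus_commute)
    moreover have u_near: "norm (u - y) < \<delta>"
      using u(1) by (simp add: dist_norm norm_minus_commute)
    ultimately obtain z where "norm (z - y) = r" "y' - z \<in> K" "infdist (z - y) K \<le> norm (u - y)"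
      using segment_crosses_sphere[of u y r y'] u(2) \<delta>(2) by force
    then have "z \<in> D" "y' - z \<in> K"
      using u_near unfolding D_def by (simp_all add: dist_norm norm_minus_commute)
    with miss show False
      by blast
  qed
  ultimately show ?thesis
    using that[of "ball y \<delta>" D] \<delta>(1) by simp
qed

lemma downset_fell_separation:
  assumes "open Y" "openin (top_of_set Y) V" "y \<in> V"
  shows "\<exists>U D. openin (top_of_set Y) U \<and> compactin (top_of_set Y) D \<and>
    downset (top_of_set Y) cone_le y \<inter> U \<noteq> {} \<and> downset (top_of_set Y) cone_le y \<inter> D = {} \<and>
    (\<forall>y'\<in>Y. downset (top_of_set Y) cone_le y' \<inter> U \<noteq> {} \<and>
       downset (top_of_set Y) cone_le y' \<inter> D = {} \<longrightarrow> y' \<in> V)"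
proof -
  have V: "open V" "V \<subseteq> Y"
    using assms by (simp_all add: openin_open_eq)
  obtain U D where UD: "open U" "compact D" "U \<subseteq> V" "D \<subseteq> V" "y \<in> U"
    "\<And>z. z \<in> D \<Longrightarrow> y - z \<notin> K"
    "\<And>y' u. u \<in> U \<Longrightarrow> y' - u \<in> K \<Longrightarrow> (\<And>z. z \<in> D \<Longrightarrow> y' - z \<notin> K) \<Longrightarrow> y' \<in> V"
    using downset_separation[OF V(1) assms(3)] by blast
  have "openin (top_of_set Y) U" "compactin (top_of_set Y) D"
    using UD V assms(1) by (auto simp: openin_open_eq compactin_subtopology)
  moreover have "y \<in> downset (top_of_set Y) cone_le y \<inter> U"
    using UD(3,5) V(2) zero_mem by (auto simp: downset_cone_le)
  then have "downset (top_of_set Y) cone_le y \<inter> U \<noteq> {}"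
    by blast
  moreover have "downset (top_of_set Y) cone_le y \<inter> D = {}"
    using UD(6) by (auto simp: downset_cone_le)
  moreover have "y' \<in> V"
    if hit: "downset (top_of_set Y) cone_le y' \<inter> U \<noteq> {}"
      and miss: "downset (top_of_set Y) cone_le y' \<inter> D = {}" for y'
  proof -
    obtain u where "u \<in> U" "y' - u \<in> K"
      using hit by (auto simp: downset_cone_le)
    moreover have "y' - z \<notin> K" if "z \<in> D" for z
      using miss that UD(4) V(2) by (auto simp: downset_cone_le)
    ultimately show ?thesis
      by (rule UD(7))
  qed
  ultimately show ?thesis
    by blast
qed

lemma homeomorphic_map_downset:
  assumes "open Y"
  shows "homeomorphic_map (top_of_set Y)
           (subtopology (fell_topology (top_of_set Y)) (downset (top_of_set Y) cone_le ` Y))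
           (downset (top_of_set Y) cone_le)"
proof -
  have "homeomorphic_map (top_of_set Y)
          (subtopology (fell_topology (top_of_set Y))
             (downset (top_of_set Y) cone_le ` topspace (top_of_set Y)))
          (downset (top_of_set Y) cone_le)"
  proof (rule homeomorphic_map_into_fell_topology)
    show "downset (top_of_set Y) cone_le y \<in> closed_sets (top_of_set Y)" for y
      by (rule downset_in_closed_sets)
    show "openin (top_of_set Y)
        {y \<in> topspace (top_of_set Y). downset (top_of_set Y) cone_le y \<inter> U \<noteq> {}}"
      if "openin (top_of_set Y) U" for U
      using openin_downset_hit[OF assms that] by simp
    show "openin (top_of_set Y)
        {y \<in> topspace (top_of_set Y). downset (top_of_set Y) cone_le y \<inter> D = {}}"
      if "compactin (top_of_set Y) D" for D
      using openin_downset_miss[OF that] by simp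
    show "\<exists>U D. openin (top_of_set Y) U \<and> compactin (top_of_set Y) D \<and>
        downset (top_of_set Y) cone_le y \<inter> U \<noteq> {} \<and> downset (top_of_set Y) cone_le y \<inter> D = {} \<and>
        (\<forall>y'\<in>topspace (top_of_set Y). downset (top_of_set Y) cone_le y' \<inter> U \<noteq> {} \<and>
           downset (top_of_set Y) cone_le y' \<inter> D = {} \<longrightarrow> y' \<in> V)"
      if "openin (top_of_set Y) V" "y \<in> V" for V y
      using downset_fell_separation[OF assms that] by simp
    show "inj_on (downset (top_of_set Y) cone_le) (topspace (top_of_set Y))"
      using inj_on_downset by simp
  qed
  then show ?thesis
    by simp
qed

end

theorem theorem3p4:
  fixes K :: "(real ^ 'n) set" and Y :: "(real ^ 'n) set"
  assumes "CARD('n) > 1"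
    and "cone K" and "convex K" and "closed K"
    and "K \<inter> uminus ` K \<subseteq> {0}"
    and "interior K \<noteq> {}"
    and "open Y" and "Y \<noteq> {}"
  shows "po_top_space (subtopology euclidean Y) (\<lambda>x y. y - x \<in> K)
       \<and> top_order_embeds_down (subtopology euclidean Y) (\<lambda>x y. y - x \<in> K)"
proof -
  have "K \<noteq> {}"
    using assms(6) interior_subset by blast
  then have "convex_cone K"
    using assms(2,3) by (simp add: convex_cone_def conic_def cone_def)
  then interpret closed_pointed_cone K
    using assms(4,5) by unfold_locales
  show ?thesis
    unfolding top_order_embeds_down_def
    using po_top_space_cone_le cone_le_iff_downset_subset homeomorphic_map_downset[OF assms(7)]
    by simp
qed

end
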